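(* Let $\gamma\in[0,1)$ and $\Omega_{\gamma}=\{z\in\mathbb{C}:|z+\frac{\gamma}{1-\gamma}|<\frac{1}{1-\gamma}\}$. Suppose that $h(z)=\sum_{n=0}^\infty a_n\left(z+\frac{\gamma}{1-\gamma}\right)^n$ and $g(z)=\sum_{n=0}^\infty b_n\left(z+\frac{\gamma}{1-\gamma}\right)^n$ are analytic in $\Omega_{\gamma}$, that $|h(z)|\le 1$ in $\Omega_\gamma$, and that $|g'(z)|\le k|h'(z)|$ in $\Omega_{\gamma}$ for some $k\in[0,1)$. Then for $|(1-\gamma)z+\gamma|=\rho<1$, $$\sum_{n=1}^\infty n\frac{|b_n|^2}{(1-\gamma)^{2n}}\rho^{2n}\le k^2\sum_{n=1}^\infty n\frac{|a_n|^2}{(1-\gamma)^{2n}}\rho^{2n}\quad\text{and}\quad \sum_{n=1}^\infty \frac{|b_n|^2}{(1-\gamma)^{2n}}\rho^{n}\le k^2\sum_{n=1}^\infty \frac{|a_n|^2}{(1-\gamma)^{2n}}\rho^{n}.$$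
   Context: $\Omega_\gamma$ is the open disk centered at $-\gamma/(1-\gamma)$ of radius $1/(1-\gamma)$; it contains the unit disk $\mathbb{D}$. *)

theory Defs
  imports "HOL-Complex_Analysis.Complex_Analysis"
begin

definition Omega :: "real \<Rightarrow> complex set" where
  "Omega \<gamma> = ball (- complex_of_real (\<gamma> / (1 - \<gamma>))) (1 / (1 - \<gamma>))"

end

theory Submission
  imports Defs
begin

text \<open>Parseval's identity on the circles \<open>|z - z0| = r < R\<close> turns the bound \<open>|g'| \<le> k |h'|\<close> into
  \<open>\<Sum> (n+1)\<^sup>2 |b (n+1)|\<^sup>2 x\<^sup>n \<le> k\<^sup>2 \<Sum> (n+1)\<^sup>2 |a (n+1)|\<^sup>2 x\<^sup>n\<close> for \<open>x = r\<^sup>2\<close>. With \<open>u n = k\<^sup>2 |a n|\<^sup>2 - |b n|\<^sup>2\<close>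
  and \<open>U x = \<Sum> u n x\<^sup>n\<close> this says \<open>(x U'(x))' \<ge> 0\<close> on \<open>[0, R\<^sup>2)\<close>. As \<open>x U'(x)\<close> vanishes at \<open>0\<close>,
  integrating gives \<open>\<Sum> n u n x\<^sup>n = x U'(x) \<ge> 0\<close>, the first inequality; hence \<open>U' \<ge> 0\<close> and
  \<open>U x \<ge> U 0\<close>, the second. Both are evaluated at \<open>x = \<rho>\<^sup>2/(1-\<gamma>)\<^sup>2\<close> and \<open>x = \<rho>/(1-\<gamma>)\<^sup>2\<close>, which
  lie below \<open>R\<^sup>2 = 1/(1-\<gamma>)\<^sup>2\<close>.\<close>

lemma has_integral_cis_of_int:
  fixes j :: int
  shows "((\<lambda>t. cis (of_int j * t)) has_integral (if j = 0 then complex_of_real (2*pi) else 0)) {0..2*pi}"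
proof (cases "j = 0")
  case True
  then show ?thesis
    using has_integral_const_real[of "1::complex" 0 "2*pi"] by (simp add: scaleR_conv_of_real)
next
  case False
  define F where "F = (\<lambda>t::real. exp (\<i> * of_real (of_int j * t)) / (\<i> * of_int j))"
  have "(F has_vector_derivative cis (of_int j * t)) (at t within {0..2*pi})" for t
  proof -
    have "((\<lambda>z. exp (\<i> * of_int j * z) / (\<i> * of_int j)) has_field_derivative
            exp (\<i> * of_int j * of_real t) * (\<i> * of_int j) / (\<i> * of_int j)) (at (of_real t))"
      by (auto intro!: derivative_eq_intros)
    from has_vector_derivative_real_field[OF this, of "{0..2*pi}"]
    show ?thesis using False by (simp add: F_def cis_conv_exp mult_ac)
  qed
  then have "((\<lambda>t. cis (of_int j * t)) has_integral (F (2*pi) - F 0)) {0..2*pi}"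
    by (intro fundamental_theorem_of_calculus) auto
  moreover have "F (2*pi) = F 0"
    using cis_conv_exp[of "2 * pi * of_int j"] by (simp add: F_def mult_ac)
  ultimately show ?thesis using False by simp
qed

lemma norm_sq_polynomial_circle:
  fixes c :: "nat \<Rightarrow> complex" and s t :: real
  shows "complex_of_real ((norm (\<Sum>n<N. c n * (of_real s * cis t)^n))^2) =
     (\<Sum>n<N. \<Sum>m<N. c n * cnj (c m) * of_real (s^(n+m)) * cis (of_int (int n - int m) * t))"
proof -
  have "(of_real s * cis t)^n = of_real (s^n) * cis (n * t)" for n
    by (simp only: power_mult_distrib Complex.DeMoivre of_real_power)
  then have "complex_of_real ((norm (\<Sum>n<N. c n * (of_real s * cis t)^n))^2) =
     (\<Sum>n<N. c n * (of_real (s^n) * cis (n * t))) * cnj (\<Sum>m<N. c m * (of_real (s^m) * cis (m * t)))"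
    by (simp only: complex_norm_square)
  also have "\<dots> = (\<Sum>n<N. c n * of_real (s^n) * cis (n * t)) *
      (\<Sum>m<N. cnj (c m) * of_real (s^m) * cis (- (m * t)))"
    by (simp add: cis_cnj mult.assoc)
  also have "\<dots> = (\<Sum>n<N. \<Sum>m<N. c n * cnj (c m) * of_real (s^(n+m)) * cis (of_int (int n - int m) * t))"
    unfolding sum_product by (intro sum.cong refl) (simp add: cis_mult power_add algebra_simps)
  finally show ?thesis .
qed

lemma parseval_polynomial:
  fixes c :: "nat \<Rightarrow> complex" and s :: real
  shows "((\<lambda>t. (norm (\<Sum>n<N. c n * (of_real s * cis t)^n))^2) has_integral
           2*pi * (\<Sum>n<N. (norm (c n))^2 * s^(2*n))) {0..2*pi}"
proof -
  define K where "K n m = c n * cnj (c m) * of_real (s^(n+m))" for n m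
  have orth: "((\<lambda>t. cis (of_int (int n - int m) * t)) has_integral
      (if n = m then complex_of_real (2*pi) else 0)) {0..2*pi}" for n m
    using has_integral_cis_of_int[of "int n - int m"] by (simp only: right_minus_eq of_nat_eq_iff)
  have "((\<lambda>t. \<Sum>n<N. \<Sum>m<N. K n m * cis (of_int (int n - int m) * t)) has_integral
          (\<Sum>n<N. \<Sum>m<N. K n m * (if n = m then complex_of_real (2*pi) else 0))) {0..2*pi}"
    by (intro has_integral_sum finite_lessThan ballI has_integral_mult_right orth)
  also have "(\<Sum>n<N. \<Sum>m<N. K n m * (if n = m then complex_of_real (2*pi) else 0)) =
             complex_of_real (2*pi * (\<Sum>n<N. (norm (c n))^2 * s^(2*n)))"
  proof -
    have "(\<Sum>m<N. K n m * (if n = m then complex_of_real (2*pi) else 0)) =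
          complex_of_real (2*pi * ((norm (c n))^2 * s^(2*n)))" if "n < N" for n
    proof -
      have "(\<Sum>m<N. K n m * (if n = m then complex_of_real (2*pi) else 0)) =
            (\<Sum>m<N. if n = m then K n m * complex_of_real (2*pi) else 0)"
        by (intro sum.cong) auto
      also have "\<dots> = K n n * complex_of_real (2*pi)"
        using that by simp
      also have "\<dots> = complex_of_real (2*pi * ((norm (c n))^2 * s^(2*n)))"
        unfolding K_def of_real_mult complex_norm_square[symmetric] mult_2[symmetric] power_add[symmetric]
        by (simp only: ac_simps)
      finally show ?thesis .
    qed
    then show ?thesis
      by (simp add: sum_distrib_left)
  qed
  finally have "((\<lambda>t. complex_of_real ((norm (\<Sum>n<N. c n * (of_real s * cis t)^n))^2)) has_integral
          complex_of_real (2*pi * (\<Sum>n<N. (norm (c n))^2 * s^(2*n)))) {0..2*pi}"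
    by (simp only: norm_sq_polynomial_circle K_def)
  from has_integral_Re[OF this] show ?thesis by simp
qed

lemma parseval_powser:
  fixes c :: "nat \<Rightarrow> complex" and s :: real
  assumes summable: "summable (\<lambda>n. norm (c n) * s^n)" and "0 \<le> s"
  defines "F \<equiv> \<lambda>t. \<Sum>n. c n * (of_real s * cis t)^n"
  shows "(\<lambda>t. (norm (F t))^2) integrable_on {0..2*pi}"
    and "(\<lambda>n. (norm (c n))^2 * s^(2*n)) sums (integral {0..2*pi} (\<lambda>t. (norm (F t))^2) / (2*pi))"
proof -
  define P where "P N t = (\<Sum>n<N. c n * (of_real s * cis t)^n)" for N t
  have norm_term: "norm (c n * (of_real s * cis t)^n) = norm (c n) * s^n" for n t
    using \<open>0 \<le> s\<close> by (simp add: norm_mult norm_power)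
  have "uniform_limit {0..2*pi} P F sequentially"
    unfolding P_def F_def by (rule Weierstrass_m_test[OF _ summable]) (simp add: norm_term)
  then have lim: "uniform_limit {0..2*pi} (\<lambda>N t. norm (P N t)) (\<lambda>t. norm (F t)) sequentially"
    by (rule uniform_limit_norm)
  have "norm (F t) \<le> (\<Sum>n. norm (c n) * s^n)" for t
    unfolding F_def by (rule norm_suminf_le[OF _ summable]) (simp add: norm_term)
  then have bounded: "bounded ((\<lambda>t. norm (F t)) ` {0..2*pi})"
    unfolding bounded_iff by auto
  have "continuous_on {0..2*pi} (\<lambda>t. norm (P N t) * norm (P N t))" for N
    unfolding P_def by (intro continuous_intros)
  from uniform_limit_integral[OF uniform_lim_mult[OF lim lim bounded bounded] this]
  obtain I J where I: "\<And>N. ((\<lambda>t. norm (P N t) * norm (P N t)) has_integral I N) {0..2*pi}"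
    and J: "((\<lambda>t. norm (F t) * norm (F t)) has_integral J) {0..2*pi}"
    and "I \<longlonglongrightarrow> J"
    by auto
  have "I N = 2*pi * (\<Sum>n<N. (norm (c n))^2 * s^(2*n))" for N
    using has_integral_unique[OF I parseval_polynomial[of c s N, folded P_def, unfolded power2_eq_square]]
    by (simp add: power2_eq_square)
  moreover have "(\<lambda>N. I N / (2*pi)) \<longlonglongrightarrow> J / (2*pi)"
    by (intro tendsto_divide \<open>I \<longlonglongrightarrow> J\<close> tendsto_const) simp
  ultimately have "(\<lambda>n. (norm (c n))^2 * s^(2*n)) sums (J / (2*pi))"
    unfolding sums_def by simp
  then show "(\<lambda>n. (norm (c n))^2 * s^(2*n)) sums (integral {0..2*pi} (\<lambda>t. (norm (F t))^2) / (2*pi))"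
    using J by (simp add: power2_eq_square integral_unique)
  show "(\<lambda>t. (norm (F t))^2) integrable_on {0..2*pi}"
    using J by (auto simp: power2_eq_square)
qed

lemma parseval_powser_ball:
  fixes c :: "nat \<Rightarrow> complex"
  assumes sums: "\<And>z. z \<in> ball z0 R \<Longrightarrow> (\<lambda>n. c n * (z - z0)^n) sums f z"
    and "0 \<le> s" "s < R"
  shows "(\<lambda>t. (norm (f (z0 + s * cis t)))^2) integrable_on {0..2*pi}"
    and "(\<lambda>n. (norm (c n))^2 * s^(2*n)) sums
           (integral {0..2*pi} (\<lambda>t. (norm (f (z0 + s * cis t)))^2) / (2*pi))"
proof -
  obtain r where "s < r" "r < R"
    using dense[OF \<open>s < R\<close>] by blast
  then have "z0 + of_real r \<in> ball z0 R"
    using \<open>0 \<le> s\<close> by (simp add: dist_norm)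
  from sums_summable[OF sums[OF this]] have "summable (\<lambda>n. c n * of_real r ^ n)"
    by simp
  then have "summable (\<lambda>n. norm (c n * of_real s ^ n))"
    by (rule powser_insidea) (use \<open>s < r\<close> \<open>0 \<le> s\<close> in simp)
  then have "summable (\<lambda>n. norm (c n) * s^n)"
    using \<open>0 \<le> s\<close> by (simp add: norm_mult norm_power)
  moreover have "(\<Sum>n. c n * (of_real s * cis t)^n) = f (z0 + s * cis t)" for t
    using sums[of "z0 + s * cis t"] \<open>s < R\<close> \<open>0 \<le> s\<close> by (simp add: dist_norm sums_iff norm_mult)
  ultimately show "(\<lambda>t. (norm (f (z0 + s * cis t)))^2) integrable_on {0..2*pi}"
    and "(\<lambda>n. (norm (c n))^2 * s^(2*n)) sums
           (integral {0..2*pi} (\<lambda>t. (norm (f (z0 + s * cis t)))^2) / (2*pi))"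
    using parseval_powser[OF _ \<open>0 \<le> s\<close>, of c] by simp_all
qed

lemma powser_norm_sq_coeffs_le:
  fixes a b :: "nat \<Rightarrow> complex"
  assumes a: "\<And>z. z \<in> ball z0 R \<Longrightarrow> (\<lambda>n. a n * (z - z0)^n) sums f z"
    and b: "\<And>z. z \<in> ball z0 R \<Longrightarrow> (\<lambda>n. b n * (z - z0)^n) sums g z"
    and le: "\<And>z. z \<in> ball z0 R \<Longrightarrow> norm (g z) \<le> k * norm (f z)"
    and "0 \<le> s" "s < R"
  shows "(\<Sum>n. (norm (b n))^2 * s^(2*n)) \<le> k^2 * (\<Sum>n. (norm (a n))^2 * s^(2*n))"
proof -
  define F where "F t = (norm (f (z0 + s * cis t)))^2" for t
  define G where "G t = (norm (g (z0 + s * cis t)))^2" for t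
  note pf = parseval_powser_ball[OF a \<open>0 \<le> s\<close> \<open>s < R\<close>, folded F_def]
  note pg = parseval_powser_ball[OF b \<open>0 \<le> s\<close> \<open>s < R\<close>, folded G_def]
  have "G t \<le> k^2 * F t" for t
  proof -
    have "z0 + s * cis t \<in> ball z0 R"
      using \<open>0 \<le> s\<close> \<open>s < R\<close> by (simp add: dist_norm norm_mult)
    from le[OF this] have "G t \<le> (k * norm (f (z0 + s * cis t)))^2"
      unfolding G_def by (simp add: power_mono)
    then show ?thesis by (simp add: F_def power_mult_distrib)
  qed
  then have "integral {0..2*pi} G \<le> k^2 * integral {0..2*pi} F"
    using integral_le[OF pg(1) integrable_on_cmult_left[OF pf(1)]] by simp
  then show ?thesis
    using pf(2) pg(2) by (simp add: sums_iff divide_right_mono)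
qed

lemma powser_sums_deriv_ball:
  fixes c :: "nat \<Rightarrow> 'a::{real_normed_field,banach}"
  assumes sums: "\<And>z. z \<in> ball z0 R \<Longrightarrow> (\<lambda>n. c n * (z - z0)^n) sums f z"
    and "z \<in> ball z0 R"
  shows "(\<lambda>n. diffs c n * (z - z0)^n) sums deriv f z"
proof -
  have sums0: "(\<lambda>n. c n * w^n) sums f (w + z0)" if "norm w < R" for w
    using sums[of "w + z0"] that by (simp add: dist_norm)
  have "norm (z - z0) < R"
    using \<open>z \<in> ball z0 R\<close> by (simp add: dist_norm norm_minus_commute)
  with sums0 have D: "((\<lambda>w. \<Sum>n. c n * w^n) has_field_derivative (\<Sum>n. diffs c n * (z - z0)^n)) (at (z - z0))"
    by (intro termdiffs_strong') (auto intro: sums_summable)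
  have "((\<lambda>w. f (w + z0)) has_field_derivative (\<Sum>n. diffs c n * (z - z0)^n)) (at (z - z0))"
    by (rule has_field_derivative_transform_within_open[OF D, of "ball 0 R"])
      (use \<open>norm (z - z0) < R\<close> sums0 in \<open>auto simp: sums_iff\<close>)
  then have "deriv f z = (\<Sum>n. diffs c n * (z - z0)^n)"
    using DERIV_shift[of f _ "z - z0" z0] by (simp add: DERIV_imp_deriv)
  moreover have "summable (\<lambda>n. diffs c n * (z - z0)^n)"
    by (rule termdiff_converges[OF \<open>norm (z - z0) < R\<close>]) (auto intro: sums_summable sums0)
  ultimately show ?thesis by (simp add: summable_sums)
qed

lemma summable_powser_abs_less:
  fixes c :: "nat \<Rightarrow> real"
  assumes "\<And>x. 0 \<le> x \<Longrightarrow> x < M \<Longrightarrow> summable (\<lambda>n. c n * x^n)" and "\<bar>y\<bar> < M"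
  shows "summable (\<lambda>n. c n * y^n)"
proof -
  obtain x where "\<bar>y\<bar> < x" "x < M"
    using dense[OF \<open>\<bar>y\<bar> < M\<close>] by blast
  then have "summable (\<lambda>n. c n * x^n)"
    by (intro assms(1)) auto
  from powser_insidea[OF this] have "summable (\<lambda>n. norm (c n * y^n))"
    using \<open>\<bar>y\<bar> < x\<close> by simp
  then show ?thesis
    by (rule summable_norm_cancel)
qed

lemma powser_times_n_sums:
  fixes c :: "nat \<Rightarrow> real"
  assumes summable: "\<And>x. 0 \<le> x \<Longrightarrow> x < M \<Longrightarrow> summable (\<lambda>n. c n * x^n)"
    and "0 \<le> x" "x < M"
  shows "(\<lambda>n. of_nat n * c n * x^n) sums (x * (\<Sum>n. diffs c n * x^n))"
proof -
  have "summable (\<lambda>n. diffs c n * x^n)"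
    by (rule termdiff_converges[of x M]) (use assms summable_powser_abs_less[OF summable] in auto)
  from sums_mult[OF diffs_equiv[OF this], of x]
  have "(\<lambda>n. x * (of_nat n * c n * x^(n - Suc 0))) sums (x * (\<Sum>n. diffs c n * x^n))" .
  moreover have "x * (of_nat n * c n * x^(n - Suc 0)) = of_nat n * c n * x^n" for n
    by (cases n) auto
  ultimately show ?thesis by simp
qed

lemma powser_ge_coeff0:
  fixes c :: "nat \<Rightarrow> real"
  assumes summable: "\<And>x. 0 \<le> x \<Longrightarrow> x < M \<Longrightarrow> summable (\<lambda>n. c n * x^n)"
    and diffs_nonneg: "\<And>x. 0 < x \<Longrightarrow> x < M \<Longrightarrow> 0 \<le> (\<Sum>n. diffs c n * x^n)"
    and "0 \<le> x" "x < M"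
  shows "c 0 \<le> (\<Sum>n. c n * x^n)"
proof -
  have D: "((\<lambda>y. \<Sum>n. c n * y^n) has_real_derivative (\<Sum>n. diffs c n * y^n)) (at y)"
    if "\<bar>y\<bar> < M" for y
    by (rule termdiffs_strong'[of M]) (use summable_powser_abs_less[OF summable] that in auto)
  have "(\<Sum>n. c n * 0^n) \<le> (\<Sum>n. c n * x^n)"
  proof (rule DERIV_nonneg_imp_increasing_open[OF \<open>0 \<le> x\<close>])
    fix y assume "0 < y" "y < x"
    with D[of y] diffs_nonneg[of y] \<open>x < M\<close>
    show "\<exists>D. ((\<lambda>y. \<Sum>n. c n * y^n) has_real_derivative D) (at y) \<and> 0 \<le> D"
      by auto
  next
    show "continuous_on {0..x} (\<lambda>y. \<Sum>n. c n * y^n)"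
      using D \<open>x < M\<close> by (intro continuous_at_imp_continuous_on ballI DERIV_isCont[OF D]) auto
  qed
  then show ?thesis by simp
qed

lemma powser_ge_coeff0_of_euler_diffs_nonneg:
  fixes u :: "nat \<Rightarrow> real"
  assumes summable: "\<And>x. 0 \<le> x \<Longrightarrow> x < M \<Longrightarrow> summable (\<lambda>n. u n * x^n)"
    and nonneg: "\<And>x. 0 < x \<Longrightarrow> x < M \<Longrightarrow> 0 \<le> (\<Sum>n. diffs (\<lambda>n. of_nat n * u n) n * x^n)"
    and "0 \<le> x" "x < M"
  shows "0 \<le> (\<Sum>n. of_nat n * u n * x^n)" and "u 0 \<le> (\<Sum>n. u n * x^n)"
proof -
  have euler: "(\<lambda>n. of_nat n * u n * y^n) sums (y * (\<Sum>n. diffs u n * y^n))"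
    if "0 \<le> y" "y < M" for y
    using powser_times_n_sums[OF summable that] .
  have euler_nonneg: "0 \<le> (\<Sum>n. of_nat n * u n * y^n)" if "0 \<le> y" "y < M" for y
    using powser_ge_coeff0[of M "\<lambda>n. of_nat n * u n", OF _ nonneg that] euler
    by (auto intro: sums_summable)
  then show "0 \<le> (\<Sum>n. of_nat n * u n * x^n)"
    using \<open>0 \<le> x\<close> \<open>x < M\<close> .
  have "0 \<le> (\<Sum>n. diffs u n * y^n)" if "0 < y" "y < M" for y
    using euler_nonneg[of y] euler[of y] that by (simp add: sums_iff zero_le_mult_iff)
  from powser_ge_coeff0[OF summable this \<open>0 \<le> x\<close> \<open>x < M\<close>]
  show "u 0 \<le> (\<Sum>n. u n * x^n)" .
qed

lemma suminf_Suc_le_scaled: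
  fixes p q :: "nat \<Rightarrow> real"
  assumes "summable p" "summable q" "K * p 0 - q 0 \<le> (\<Sum>n. K * p n - q n)"
  shows "(\<Sum>n. q (Suc n)) \<le> K * (\<Sum>n. p (Suc n))"
proof -
  have "(\<Sum>n. K * p n - q n) = K * (\<Sum>n. p n) - (\<Sum>n. q n)"
    using assms(1,2) by (simp add: suminf_diff[symmetric] summable_mult suminf_mult)
  with assms show ?thesis
    by (simp add: suminf_split_head right_diff_distrib)
qed

lemma euler_diffs_norm_sq_coeffs_nonneg:
  fixes a b :: "nat \<Rightarrow> complex"
  assumes a: "\<And>z. z \<in> ball z0 R \<Longrightarrow> (\<lambda>n. a n * (z - z0)^n) sums f z"
    and b: "\<And>z. z \<in> ball z0 R \<Longrightarrow> (\<lambda>n. b n * (z - z0)^n) sums g z"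
    and deriv_le: "\<And>z. z \<in> ball z0 R \<Longrightarrow> norm (deriv g z) \<le> k * norm (deriv f z)"
    and "0 \<le> s" "s < R"
  shows "0 \<le> (\<Sum>n. diffs (\<lambda>n. of_nat n * (k^2 * (norm (a n))^2 - (norm (b n))^2)) n * (s^2)^n)"
proof -
  define P where "P = (\<lambda>n. (norm (diffs a n))^2 * s^(2*n))"
  define Q where "Q = (\<lambda>n. (norm (diffs b n))^2 * s^(2*n))"
  have da: "\<And>z. z \<in> ball z0 R \<Longrightarrow> (\<lambda>n. diffs a n * (z - z0)^n) sums deriv f z"
    by (rule powser_sums_deriv_ball[OF a])
  have db: "\<And>z. z \<in> ball z0 R \<Longrightarrow> (\<lambda>n. diffs b n * (z - z0)^n) sums deriv g z"
    by (rule powser_sums_deriv_ball[OF b])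
  have "summable P"
    unfolding P_def by (rule sums_summable[OF parseval_powser_ball(2)[OF da \<open>0 \<le> s\<close> \<open>s < R\<close>]])
  have "summable Q"
    unfolding Q_def by (rule sums_summable[OF parseval_powser_ball(2)[OF db \<open>0 \<le> s\<close> \<open>s < R\<close>]])
  have "0 \<le> k^2 * (\<Sum>n. P n) - (\<Sum>n. Q n)"
    using powser_norm_sq_coeffs_le[OF da db deriv_le \<open>0 \<le> s\<close> \<open>s < R\<close>] by (simp add: P_def Q_def)
  also have "\<dots> = (\<Sum>n. k^2 * P n) - (\<Sum>n. Q n)"
    using suminf_mult[OF \<open>summable P\<close>] by simp
  also have "\<dots> = (\<Sum>n. k^2 * P n - Q n)"
    by (intro suminf_diff summable_mult \<open>summable P\<close> \<open>summable Q\<close>)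
  also have "(\<lambda>n. k^2 * P n - Q n) = (\<lambda>n. diffs (\<lambda>n. of_nat n * (k^2 * (norm (a n))^2 - (norm (b n))^2)) n * (s^2)^n)"
    by (simp add: fun_eq_iff P_def Q_def diffs_def norm_mult power_mult_distrib power_mult power2_eq_square
        algebra_simps del: of_nat_Suc)
  finally show ?thesis .
qed

lemma norm_sq_coeffs_ineqs_of_deriv_le:
  fixes a b :: "nat \<Rightarrow> complex"
  assumes a: "\<And>z. z \<in> ball z0 R \<Longrightarrow> (\<lambda>n. a n * (z - z0)^n) sums f z"
    and b: "\<And>z. z \<in> ball z0 R \<Longrightarrow> (\<lambda>n. b n * (z - z0)^n) sums g z"
    and deriv_le: "\<And>z. z \<in> ball z0 R \<Longrightarrow> norm (deriv g z) \<le> k * norm (deriv f z)"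
    and "0 < R" "0 \<le> x" "x < R^2"
  shows "summable (\<lambda>n. real (Suc n) * (norm (b (Suc n)))^2 * x^Suc n)"
    and "summable (\<lambda>n. real (Suc n) * (norm (a (Suc n)))^2 * x^Suc n)"
    and "(\<Sum>n. real (Suc n) * (norm (b (Suc n)))^2 * x^Suc n)
           \<le> k^2 * (\<Sum>n. real (Suc n) * (norm (a (Suc n)))^2 * x^Suc n)"
    and "summable (\<lambda>n. (norm (b (Suc n)))^2 * x^Suc n)"
    and "summable (\<lambda>n. (norm (a (Suc n)))^2 * x^Suc n)"
    and "(\<Sum>n. (norm (b (Suc n)))^2 * x^Suc n) \<le> k^2 * (\<Sum>n. (norm (a (Suc n)))^2 * x^Suc n)"
proof -
  define u where "u n = k^2 * (norm (a n))^2 - (norm (b n))^2" for n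
  have root: "0 \<le> sqrt y" "sqrt y < R" "(sqrt y)^2 = y" if "0 \<le> y" "y < R^2" for y
    using that \<open>0 < R\<close> real_sqrt_less_mono[of y "R^2"] by auto
  have sa: "\<And>y. 0 \<le> y \<Longrightarrow> y < R^2 \<Longrightarrow> summable (\<lambda>n. (norm (a n))^2 * y^n)"
    using sums_summable[OF parseval_powser_ball(2)[OF a root(1,2)]] root(3) by (simp add: power_mult)
  have sb: "\<And>y. 0 \<le> y \<Longrightarrow> y < R^2 \<Longrightarrow> summable (\<lambda>n. (norm (b n))^2 * y^n)"
    using sums_summable[OF parseval_powser_ball(2)[OF b root(1,2)]] root(3) by (simp add: power_mult)
  have su: "summable (\<lambda>n. u n * y^n)" if "0 \<le> y" "y < R^2" for y
    using summable_diff[OF summable_mult[OF sa[OF that], of "k^2"] sb[OF that]]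
    by (simp add: u_def algebra_simps)
  have "\<And>y. 0 < y \<Longrightarrow> y < R^2 \<Longrightarrow> 0 \<le> (\<Sum>n. diffs (\<lambda>n. of_nat n * u n) n * y^n)"
    using euler_diffs_norm_sq_coeffs_nonneg[OF a b deriv_le root(1,2)] root(3) by (simp add: u_def)
  note u_nonneg = powser_ge_coeff0_of_euler_diffs_nonneg[OF su this \<open>0 \<le> x\<close> \<open>x < R^2\<close>]
  have ta: "summable (\<lambda>n. real n * (norm (a n))^2 * x^n)"
    using powser_times_n_sums[OF sa \<open>0 \<le> x\<close> \<open>x < R^2\<close>] by (rule sums_summable)
  have tb: "summable (\<lambda>n. real n * (norm (b n))^2 * x^n)"
    using powser_times_n_sums[OF sb \<open>0 \<le> x\<close> \<open>x < R^2\<close>] by (rule sums_summable)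
  show "summable (\<lambda>n. real (Suc n) * (norm (b (Suc n)))^2 * x^Suc n)"
    using tb by (subst summable_Suc_iff)
  show "summable (\<lambda>n. real (Suc n) * (norm (a (Suc n)))^2 * x^Suc n)"
    using ta by (subst summable_Suc_iff)
  show "summable (\<lambda>n. (norm (b (Suc n)))^2 * x^Suc n)"
    using sb[OF \<open>0 \<le> x\<close> \<open>x < R^2\<close>] by (subst summable_Suc_iff)
  show "summable (\<lambda>n. (norm (a (Suc n)))^2 * x^Suc n)"
    using sa[OF \<open>0 \<le> x\<close> \<open>x < R^2\<close>] by (subst summable_Suc_iff)
  show "(\<Sum>n. real (Suc n) * (norm (b (Suc n)))^2 * x^Suc n)
           \<le> k^2 * (\<Sum>n. real (Suc n) * (norm (a (Suc n)))^2 * x^Suc n)"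
    by (rule suminf_Suc_le_scaled[OF ta tb]) (use u_nonneg(1) in \<open>simp add: u_def algebra_simps\<close>)
  show "(\<Sum>n. (norm (b (Suc n)))^2 * x^Suc n) \<le> k^2 * (\<Sum>n. (norm (a (Suc n)))^2 * x^Suc n)"
    by (rule suminf_Suc_le_scaled[OF sa sb, OF \<open>0 \<le> x\<close> \<open>x < R^2\<close> \<open>0 \<le> x\<close> \<open>x < R^2\<close>])
      (use u_nonneg(2) in \<open>simp add: u_def algebra_simps\<close>)
qed

theorem lemma2p3:
  fixes \<gamma> k \<rho> :: real and h g :: "complex \<Rightarrow> complex" and a b :: "nat \<Rightarrow> complex"
  assumes "0 \<le> \<gamma>" "\<gamma> < 1"
    and "0 \<le> k" "k < 1"
    and "h holomorphic_on Omega \<gamma>" "g holomorphic_on Omega \<gamma>"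
    and "\<And>z. z \<in> Omega \<gamma> \<Longrightarrow> (\<lambda>n. a n * (z + of_real (\<gamma> / (1 - \<gamma>))) ^ n) sums h z"
    and "\<And>z. z \<in> Omega \<gamma> \<Longrightarrow> (\<lambda>n. b n * (z + of_real (\<gamma> / (1 - \<gamma>))) ^ n) sums g z"
    and "\<And>z. z \<in> Omega \<gamma> \<Longrightarrow> norm (h z) \<le> 1"
    and "\<And>z. z \<in> Omega \<gamma> \<Longrightarrow> norm (deriv g z) \<le> k * norm (deriv h z)"
    and "0 \<le> \<rho>" "\<rho> < 1"
  shows "summable (\<lambda>n. real (Suc n) * norm (b (Suc n))^2 / (1 - \<gamma>)^(2 * Suc n) * \<rho>^(2 * Suc n))
       \<and> summable (\<lambda>n. real (Suc n) * norm (a (Suc n))^2 / (1 - \<gamma>)^(2 * Suc n) * \<rho>^(2 * Suc n))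
       \<and> (\<Sum>n. real (Suc n) * norm (b (Suc n))^2 / (1 - \<gamma>)^(2 * Suc n) * \<rho>^(2 * Suc n))
           \<le> k^2 * (\<Sum>n. real (Suc n) * norm (a (Suc n))^2 / (1 - \<gamma>)^(2 * Suc n) * \<rho>^(2 * Suc n))
       \<and> summable (\<lambda>n. norm (b (Suc n))^2 / (1 - \<gamma>)^(2 * Suc n) * \<rho>^(Suc n))
       \<and> summable (\<lambda>n. norm (a (Suc n))^2 / (1 - \<gamma>)^(2 * Suc n) * \<rho>^(Suc n))
       \<and> (\<Sum>n. norm (b (Suc n))^2 / (1 - \<gamma>)^(2 * Suc n) * \<rho>^(Suc n))
           \<le> k^2 * (\<Sum>n. norm (a (Suc n))^2 / (1 - \<gamma>)^(2 * Suc n) * \<rho>^(Suc n))"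
proof -
  define z0 where "z0 = - complex_of_real (\<gamma> / (1 - \<gamma>))"
  define R where "R = 1 / (1 - \<gamma>)"
  have Omega: "Omega \<gamma> = ball z0 R"
    by (simp add: Omega_def z0_def R_def)
  have a: "\<And>z. z \<in> ball z0 R \<Longrightarrow> (\<lambda>n. a n * (z - z0)^n) sums h z"
    using assms(7) by (simp add: Omega z0_def)
  have b: "\<And>z. z \<in> ball z0 R \<Longrightarrow> (\<lambda>n. b n * (z - z0)^n) sums g z"
    using assms(8) by (simp add: Omega z0_def)
  have deriv_le: "\<And>z. z \<in> ball z0 R \<Longrightarrow> norm (deriv g z) \<le> k * norm (deriv h z)"
    using assms(10) by (simp add: Omega)
  have "0 < R"
    using assms(2) by (simp add: R_def)
  define x1 where "x1 = \<rho>^2 / (1 - \<gamma>)^2"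
  define x2 where "x2 = \<rho> / (1 - \<gamma>)^2"
  have "0 \<le> x1" "x1 < R^2" "0 \<le> x2" "x2 < R^2"
    using assms(2,11,12) power_strict_mono[of \<rho> 1 2]
    by (auto simp: x1_def x2_def R_def power_divide divide_strict_right_mono)
  have "real (Suc n) * norm (c (Suc n))^2 / (1 - \<gamma>)^(2 * Suc n) * \<rho>^(2 * Suc n)
          = real (Suc n) * (norm (c (Suc n)))^2 * x1^Suc n"
    and "norm (c (Suc n))^2 / (1 - \<gamma>)^(2 * Suc n) * \<rho>^(Suc n) = (norm (c (Suc n)))^2 * x2^Suc n"
    for c :: "nat \<Rightarrow> complex" and n
    by (simp_all add: x1_def x2_def power_divide power_mult[symmetric] del: of_nat_Suc power_Suc)
  with norm_sq_coeffs_ineqs_of_deriv_le[OF a b deriv_le \<open>0 < R\<close> \<open>0 \<le> x1\<close> \<open>x1 < R^2\<close>]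
       norm_sq_coeffs_ineqs_of_deriv_le[OF a b deriv_le \<open>0 < R\<close> \<open>0 \<le> x2\<close> \<open>x2 < R^2\<close>]
  show ?thesis by simp
qed

end
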